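(* Let $G=C_{2n}(a,n)$ with $a\in\{1,2\}$ be a connected cubic circulant graph. Then the induced matching number of $G$ is $\operatorname{im}(G)=\lfloor n/2\rfloor$.
   Context: For integers $1\le a<n$, $C_{2n}(a,n)$ is the simple graph on vertex set $[2n]$ in which distinct vertices $i,j$ are adjacent iff $|i-j|\in\{a,n,2n-a\}$. A matching $M$ of a graph $G$ is a set of pairwise disjoint edges; it is induced if the edges of $M$ are exactly the edges of the induced subgraph of $G$ on the vertices covered by $M$. $\operatorname{im}(G)$ is the maximum size of an induced matching of $G$. *)

theory Defs
  imports Main
begin

text \<open>Simple graphs given by a finite vertex set V and a symmetric irreflexive
  adjacency relation E (only its restriction to V matters).\<close>

definition graph_edges :: "'a set \<Rightarrow> ('a \<Rightarrow> 'a \<Rightarrow> bool) \<Rightarrow> 'a set set" where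
  "graph_edges V E = {{u, v} | u v. u \<in> V \<and> v \<in> V \<and> E u v}"

definition induced_matching :: "'a set \<Rightarrow> ('a \<Rightarrow> 'a \<Rightarrow> bool) \<Rightarrow> 'a set set \<Rightarrow> bool" where
  "induced_matching V E M \<longleftrightarrow>
     M \<subseteq> graph_edges V E \<and>
     (\<forall>e\<in>M. \<forall>f\<in>M. e \<noteq> f \<longrightarrow> e \<inter> f = {}) \<and>
     (\<forall>u v. u \<in> \<Union>M \<and> v \<in> \<Union>M \<and> E u v \<longrightarrow> {u, v} \<in> M)"

definition induced_matching_number :: "'a set \<Rightarrow> ('a \<Rightarrow> 'a \<Rightarrow> bool) \<Rightarrow> nat" where
  "induced_matching_number V E = Max {card M | M. induced_matching V E M}"

definition graph_connected :: "'a set \<Rightarrow> ('a \<Rightarrow> 'a \<Rightarrow> bool) \<Rightarrow> bool" where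
  "graph_connected V E \<longleftrightarrow>
     (\<forall>u\<in>V. \<forall>v\<in>V. (\<lambda>x y. x \<in> V \<and> y \<in> V \<and> E x y)\<^sup>*\<^sup>* u v)"

definition cubic :: "'a set \<Rightarrow> ('a \<Rightarrow> 'a \<Rightarrow> bool) \<Rightarrow> bool" where
  "cubic V E \<longleftrightarrow> (\<forall>v\<in>V. card {u \<in> V. E v u} = 3)"

definition circ_V :: "nat \<Rightarrow> nat set" where
  "circ_V n = {1..2*n}"

definition circ_adj :: "nat \<Rightarrow> nat \<Rightarrow> nat \<Rightarrow> nat \<Rightarrow> bool" where
  "circ_adj n a i j \<longleftrightarrow> i \<noteq> j \<and> nat \<bar>int i - int j\<bar> \<in> {a, n, 2*n - a}"

end

theory Submission
  imports Defs
begin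

(* The vertices of C_2n(a,n) split into the n spokes {r, r + n}, 1 <= r <= n, joined by the
   edges of length n, while the edges of length a join spoke r to spoke r + a (mod n).
   An induced matching covers at most two vertices of a spoke, and if it covers both then
   the whole spoke r + a is uncovered: each of its vertices is adjacent to a covered vertex
   of spoke r whose only covered neighbour is the other end of spoke r.  Pairing full spokes
   with empty ones bounds the number of covered vertices by n, so im <= n div 2.
   Conversely, the first n div 2 spokes at positions 1..a, 2a+1..3a, 4a+1..5a, ... form an
   induced matching; for a = 2 this needs n odd, which connectivity forces because for
   a and n both even every edge joins vertices of equal parity. *)

lemma induced_matchingD:
  assumes "induced_matching V E M"
  shows "M \<subseteq> graph_edges V E"
    and "\<And>e f. e \<in> M \<Longrightarrow> f \<in> M \<Longrightarrow> e \<noteq> f \<Longrightarrow> e \<inter> f = {}"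
    and "\<And>u v. u \<in> \<Union>M \<Longrightarrow> v \<in> \<Union>M \<Longrightarrow> E u v \<Longrightarrow> {u, v} \<in> M"
  using assms unfolding induced_matching_def by simp_all

lemma induced_matching_Union_subset:
  assumes "induced_matching V E M"
  shows "\<Union>M \<subseteq> V"
proof
  fix x assume "x \<in> \<Union>M"
  then obtain e where "e \<in> M" "x \<in> e"
    by blast
  moreover have "M \<subseteq> graph_edges V E"
    using induced_matchingD(1)[OF assms] .
  ultimately show "x \<in> V"
    unfolding graph_edges_def by blast
qed

lemma induced_matching_unique_neighbour:
  assumes "induced_matching V E M" "u \<in> \<Union>M" "v \<in> \<Union>M" "w \<in> \<Union>M" "E u v" "E u w"
  shows "v = w"
proof -
  note closed = induced_matchingD(3)[OF assms(1)]
  have "{u, v} = {u, w}"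
    using induced_matchingD(2)[OF assms(1) closed[OF assms(2,3,5)] closed[OF assms(2,4,6)]]
    by blast
  then show ?thesis by (auto simp: doubleton_eq_iff)
qed

lemma card_Union_induced_matching:
  assumes "finite V" "\<And>v. \<not> E v v" "induced_matching V E M"
  shows "card (\<Union>M) = 2 * card M"
proof -
  note edges = induced_matchingD(1)[OF assms(3)]
    and disjoint = induced_matchingD(2)[OF assms(3)]
  have edge: "e \<subseteq> V \<and> card e = 2" if eM: "e \<in> M" for e
  proof -
    obtain u v where "e = {u, v}" "u \<in> V" "v \<in> V" "E u v"
      using edges eM unfolding graph_edges_def by blast
    moreover have "u \<noteq> v"
      using assms(2) \<open>E u v\<close> by metis
    ultimately show ?thesis by simp
  qed
  have "finite e" if "e \<in> M" for e
    using edge[OF that] assms(1) by (metis rev_finite_subset)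
  then have "card (\<Union>M) = (\<Sum>e\<in>M. card e)"
    using disjoint by (intro card_Union_disjoint) (auto simp: pairwise_def disjnt_def)
  also have "\<dots> = 2 * card M"
    using edge by simp
  finally show ?thesis .
qed

lemma induced_matching_number_eqI:
  assumes "\<And>M. induced_matching V E M \<Longrightarrow> card M \<le> k"
    and "induced_matching V E M" "card M = k"
  shows "induced_matching_number V E = k"
proof -
  let ?C = "{card M | M. induced_matching V E M}"
  have bound: "\<And>c. c \<in> ?C \<Longrightarrow> c \<le> k"
    using assms(1) by blast
  then have "finite ?C"
    by (meson atMost_iff finite_atMost finite_subset subsetI)
  moreover have "k \<in> ?C"
    using assms(2,3) by blast
  ultimately show ?thesis
    unfolding induced_matching_number_def using bound by (intro Max_eqI)
qed

lemma sum_le_card_if_full_maps_to_empty: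
  fixes c :: "'a \<Rightarrow> nat"
  assumes "finite P" "inj_on f P" "f ` P \<subseteq> P"
    and "\<And>r. r \<in> P \<Longrightarrow> c r \<le> 2"
    and "\<And>r. r \<in> P \<Longrightarrow> c r = 2 \<Longrightarrow> c (f r) = 0"
  shows "sum c P \<le> card P"
proof -
  define D where "D = {r \<in> P. c r = 2}"
  define Z where "Z = {r \<in> P. c r = 0}"
  have "(\<Sum>r\<in>P. c r + of_bool (r \<in> Z)) = (\<Sum>r\<in>P. 1 + of_bool (r \<in> D))"
    using assms(4) unfolding D_def Z_def by (intro sum.cong) force+
  moreover have "P \<inter> Z = Z" "P \<inter> D = D"
    unfolding D_def Z_def by blast+
  ultimately have "sum c P + card Z = card P + card D"
    using assms(1) by (simp add: sum.distrib sum_Suc)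
  moreover have "card D \<le> card Z"
    using assms unfolding D_def Z_def
    by (intro card_inj_on_le[of f]) (auto intro: inj_on_subset)
  ultimately show ?thesis by linarith
qed

lemma circ_adj_iff:
  assumes "a < n"
  shows "circ_adj n a i j \<longleftrightarrow> i \<noteq> j \<and>
    (i = j + a \<or> j = i + a \<or> i = j + n \<or> j = i + n \<or> i + a = j + 2*n \<or> j + a = i + 2*n)"
  using assms unfolding circ_adj_def by auto

lemma circ_adj_sym: "circ_adj n a i j \<Longrightarrow> circ_adj n a j i"
  unfolding circ_adj_def by (simp add: abs_minus_commute)

lemma circ_adj_parity:
  assumes "even a" "even n" "circ_adj n a x y"
  shows "even x \<longleftrightarrow> even y"
proof -
  have "\<forall>d\<in>{a, n, 2 * n - a}. even d"
    using assms(1,2) by simp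
  moreover have "nat \<bar>int x - int y\<bar> \<in> {a, n, 2 * n - a}"
    using assms(3) unfolding circ_adj_def by blast
  ultimately have "even (nat \<bar>int x - int y\<bar>)"
    by blast
  then have "even (int x - int y)"
    by (simp add: even_nat_iff)
  then show ?thesis by simp
qed

lemma circ_disconnected_if_even:
  assumes "even a" "even n" "1 \<le> n"
  shows "\<not> graph_connected (circ_V n) (circ_adj n a)"
proof
  let ?R = "\<lambda>x y. x \<in> circ_V n \<and> y \<in> circ_V n \<and> circ_adj n a x y"
  have odd_reachable: "odd y" if "?R\<^sup>*\<^sup>* 1 y" for y
    using that
  proof (induction rule: rtranclp_induct)
    case (step y z)
    then show ?case using circ_adj_parity[OF assms(1,2)] by blast
  qed simp
  assume "graph_connected (circ_V n) (circ_adj n a)"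
  then have "?R\<^sup>*\<^sup>* 1 2"
    using assms(3) unfolding graph_connected_def circ_V_def by simp
  then show False
    using odd_reachable by fastforce
qed

definition spoke :: "nat \<Rightarrow> nat \<Rightarrow> nat set" where
  "spoke n r = {r, r + n}"

definition circ_rotate :: "nat \<Rightarrow> nat \<Rightarrow> nat \<Rightarrow> nat" where
  "circ_rotate n a r = (if r + a \<le> n then r + a else r + a - n)"

lemma inj_spoke: "inj (spoke n)"
  by (rule injI) (auto simp: spoke_def doubleton_eq_iff)

lemma card_spoke_le: "card (spoke n r) \<le> 2"
  by (simp add: spoke_def card_insert_if)

lemma spoke_disjoint: "r \<in> {1..n} \<Longrightarrow> s \<in> {1..n} \<Longrightarrow> r \<noteq> s \<Longrightarrow> spoke n r \<inter> spoke n s = {}"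
  by (auto simp: spoke_def)

lemma circ_V_eq_UN_spoke: "circ_V n = (\<Union>r\<in>{1..n}. spoke n r)"
proof (intro equalityI subsetI)
  fix v assume "v \<in> circ_V n"
  then consider "v \<in> {1..n}" | "v - n \<in> {1..n}" "v = (v - n) + n"
    unfolding circ_V_def by fastforce
  then show "v \<in> (\<Union>r\<in>{1..n}. spoke n r)"
    unfolding spoke_def by cases blast+
qed (auto simp: circ_V_def spoke_def)

lemma card_eq_sum_card_spoke:
  assumes "S \<subseteq> circ_V n"
  shows "card S = (\<Sum>r\<in>{1..n}. card (S \<inter> spoke n r))"
proof -
  have "S = (\<Union>r\<in>{1..n}. S \<inter> spoke n r)"
    using assms circ_V_eq_UN_spoke by blast
  also have "card \<dots> = (\<Sum>r\<in>{1..n}. card (S \<inter> spoke n r))"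
    using spoke_disjoint by (intro card_UN_disjoint) (auto simp: spoke_def)
  finally show ?thesis .
qed

lemma spoke_partner:
  assumes "a < n" "u \<in> spoke n r"
  shows "\<exists>u'\<in>spoke n r. circ_adj n a u u'"
  using assms unfolding spoke_def circ_adj_iff[OF assms(1)] by auto

lemma circ_rotate_inj_on: "inj_on (circ_rotate n a) {1..n}"
  by (rule inj_onI) (auto simp: circ_rotate_def split: if_splits)

lemma circ_rotate_image: "a \<le> n \<Longrightarrow> circ_rotate n a ` {1..n} \<subseteq> {1..n}"
  by (auto simp: circ_rotate_def)

lemma spoke_circ_rotate_disjoint:
  assumes "1 \<le> a" "a < n" "r \<in> {1..n}"
  shows "spoke n (circ_rotate n a r) \<inter> spoke n r = {}"
  using assms by (auto simp: spoke_def circ_rotate_def)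

lemma spoke_circ_rotate_adjacent:
  assumes "1 \<le> a" "a < n" "r \<in> {1..n}" "w \<in> spoke n (circ_rotate n a r)"
  shows "\<exists>u\<in>spoke n r. circ_adj n a u w"
proof (cases "r + a \<le> n")
  case True
  then have "w = r + a \<or> w = r + a + n"
    using assms(4) by (simp add: spoke_def circ_rotate_def)
  then show ?thesis
    using assms(1) unfolding spoke_def circ_adj_iff[OF assms(2)] by auto
next
  case False
  then have "w + n = r + a \<or> w = r + a"
    using assms(4) by (auto simp: spoke_def circ_rotate_def)
  then show ?thesis
    using assms(1-3) unfolding spoke_def circ_adj_iff[OF assms(2)] by auto
qed

lemma induced_matching_full_spoke:
  assumes "1 \<le> a" "a < n" "induced_matching (circ_V n) (circ_adj n a) M"
    and "r \<in> {1..n}" "spoke n r \<subseteq> \<Union>M"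
  shows "\<Union>M \<inter> spoke n (circ_rotate n a r) = {}"
proof -
  have "w \<notin> \<Union>M" if w: "w \<in> spoke n (circ_rotate n a r)" for w
  proof
    assume "w \<in> \<Union>M"
    obtain u where u: "u \<in> spoke n r" "circ_adj n a u w"
      using spoke_circ_rotate_adjacent[OF assms(1,2,4) w] by blast
    obtain u' where u': "u' \<in> spoke n r" "circ_adj n a u u'"
      using spoke_partner[OF assms(2) u(1)] by blast
    have "w = u'"
      using induced_matching_unique_neighbour[OF assms(3)] u u' assms(5) \<open>w \<in> \<Union>M\<close>
      by (metis subsetD)
    then show False
      using spoke_circ_rotate_disjoint[OF assms(1,2,4)] w u'(1) by auto
  qed
  then show ?thesis
    by blast
qed

lemma circ_induced_matching_card_le:
  assumes "1 \<le> a" "a < n" "induced_matching (circ_V n) (circ_adj n a) M"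
  shows "card M \<le> n div 2"
proof -
  define c where "c r = card (\<Union>M \<inter> spoke n r)" for r
  have c_le_card: "c r \<le> card (spoke n r)" for r
    unfolding c_def by (rule card_mono) (simp_all add: spoke_def)
  have c_le: "c r \<le> 2" for r
    using c_le_card[of r] card_spoke_le[of n r] by linarith
  have full_empty: "c (circ_rotate n a r) = 0" if r: "r \<in> {1..n}" "c r = 2" for r
  proof -
    have "card (\<Union>M \<inter> spoke n r) = card (spoke n r)"
      using r(2) c_le_card[of r] card_spoke_le[of n r] unfolding c_def by linarith
    then have "spoke n r \<subseteq> \<Union>M"
      using card_subset_eq[of "spoke n r" "\<Union>M \<inter> spoke n r"] by (auto simp: spoke_def)
    then show ?thesis
      using induced_matching_full_spoke[OF assms r(1)] unfolding c_def by simp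
  qed
  have "card (\<Union>M) = sum c {1..n}"
    unfolding c_def by (rule card_eq_sum_card_spoke[OF induced_matching_Union_subset[OF assms(3)]])
  also have "\<dots> \<le> card {1..n}"
  proof (rule sum_le_card_if_full_maps_to_empty)
    show "inj_on (circ_rotate n a) {1..n}"
      by (rule circ_rotate_inj_on)
    show "circ_rotate n a ` {1..n} \<subseteq> {1..n}"
      using assms(2) by (intro circ_rotate_image) simp
    show "c (circ_rotate n a r) = 0" if "r \<in> {1..n}" "c r = 2" for r
      using full_empty that .
  qed (simp_all add: c_le)
  finally have "card (\<Union>M) \<le> n" by simp
  moreover have "card (\<Union>M) = 2 * card M"
    by (rule card_Union_induced_matching[OF _ _ assms(3)]) (simp_all add: circ_V_def circ_adj_def)
  ultimately show ?thesis by simp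
qed

lemma spoke_adjacent_positions:
  assumes "a < n" "x \<in> {1..n}" "y \<in> {1..n}" "x < y"
    and "u \<in> spoke n x" "v \<in> spoke n y" "circ_adj n a u v"
  shows "y - x = a \<or> y - x + a = n"
  using assms unfolding spoke_def circ_adj_iff[OF assms(1)] by auto

lemma spoke_image_induced_matching:
  assumes "a < n" "P \<subseteq> {1..n}"
    and separated: "\<And>x y. x \<in> P \<Longrightarrow> y \<in> P \<Longrightarrow> x < y \<Longrightarrow> y - x \<noteq> a \<and> y - x + a \<noteq> n"
  shows "induced_matching (circ_V n) (circ_adj n a) (spoke n ` P)"
  unfolding induced_matching_def
proof (intro conjI allI impI ballI)
  show "spoke n ` P \<subseteq> graph_edges (circ_V n) (circ_adj n a)"
  proof
    fix e assume "e \<in> spoke n ` P"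
    then obtain r where "r \<in> P" "e = spoke n r"
      by blast
    then have "r \<in> circ_V n" "r + n \<in> circ_V n" "e = {r, r + n}"
      using assms(2) by (auto simp: circ_V_def spoke_def)
    moreover have "circ_adj n a r (r + n)"
      using assms(1) unfolding circ_adj_iff[OF assms(1)] by simp
    ultimately show "e \<in> graph_edges (circ_V n) (circ_adj n a)"
      unfolding graph_edges_def by blast
  qed
next
  fix e f assume "e \<in> spoke n ` P" "f \<in> spoke n ` P" "e \<noteq> f"
  then obtain r s where rs: "r \<in> P" "s \<in> P" "r \<noteq> s" "e = spoke n r" "f = spoke n s"
    by blast
  then have "r \<in> {1..n}" "s \<in> {1..n}"
    using assms(2) by auto
  then show "e \<inter> f = {}"
    using spoke_disjoint rs(3-5) by simp
next
  fix u v assume uv: "u \<in> \<Union>(spoke n ` P) \<and> v \<in> \<Union>(spoke n ` P) \<and> circ_adj n a u v"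
  then obtain x y where xy: "x \<in> P" "y \<in> P" "u \<in> spoke n x" "v \<in> spoke n y"
    by blast
  have "\<not> x < y"
  proof
    assume "x < y"
    then have "y - x = a \<or> y - x + a = n"
      using spoke_adjacent_positions[OF assms(1) _ _ _ xy(3,4)] uv xy(1,2) assms(2) by blast
    then show False
      using separated[OF xy(1,2) \<open>x < y\<close>] by blast
  qed
  moreover have "\<not> y < x"
  proof
    assume "y < x"
    then have "x - y = a \<or> x - y + a = n"
      using spoke_adjacent_positions[OF assms(1) _ _ _ xy(4,3)] circ_adj_sym uv xy(1,2) assms(2)
      by blast
    then show False
      using separated[OF xy(2,1) \<open>y < x\<close>] by blast
  qed
  moreover have "u \<noteq> v"
    using uv unfolding circ_adj_def by simp
  ultimately have "{u, v} = spoke n x"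
    using xy unfolding spoke_def by auto
  then show "{u, v} \<in> spoke n ` P"
    using xy(1) by blast
qed

definition block_pos :: "nat \<Rightarrow> nat \<Rightarrow> nat" where
  "block_pos a k = 2 * a * (k div a) + k mod a + 1"

lemma block_pos_le: "block_pos a k \<le> 2 * k + 1"
proof -
  have "2 * a * (k div a) = 2 * (k div a * a)"
    by (simp add: algebra_simps)
  then show ?thesis
    using div_mult_mod_eq[of k a] unfolding block_pos_def by linarith
qed

lemma block_pos_in_range: "k < n div 2 \<Longrightarrow> block_pos a k \<in> {1..n}"
  using block_pos_le[of a k] div_times_less_eq_dividend[of n 2] by (simp add: block_pos_def)

lemma block_pos_separated:
  assumes "a \<in> {1, 2}" "a = 2 \<longrightarrow> odd n" "i < j" "j < n div 2"
  shows "block_pos a i < block_pos a j \<and> block_pos a j - block_pos a i \<noteq> a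
    \<and> block_pos a j - block_pos a i + a \<noteq> n"
proof -
  consider "a = 1" | "a = 2" using assms(1) by blast
  then show ?thesis
  proof cases
    case 1
    then have "block_pos a i = 2 * i + 1" "block_pos a j = 2 * j + 1"
      by (simp_all add: block_pos_def)
    moreover have "2 * j + 1 - (2 * i + 1) \<noteq> 1"
      by presburger
    moreover have "2 * j + 2 \<le> n"
      using assms(4) div_times_less_eq_dividend[of n 2] by linarith
    ultimately show ?thesis
      using 1 assms(3) by simp
  next
    case 2
    have mod4: "4 * q + s \<noteq> 4 * p + r + 2" if "r < 2" "s < 2" for p q r s :: nat
      using that by presburger
    have pos: "block_pos a i = 4 * (i div 2) + i mod 2 + 1" "block_pos a j = 4 * (j div 2) + j mod 2 + 1"
      using 2 by (simp_all add: block_pos_def)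
    have "i = 2 * (i div 2) + i mod 2" "j = 2 * (j div 2) + j mod 2" "i mod 2 < 2" "j mod 2 < 2"
      by simp_all
    moreover have "n = 2 * (n div 2) + 1"
      using 2 assms(2) by simp
    ultimately show ?thesis
      using pos mod4[of "i mod 2" "j mod 2" "j div 2" "i div 2"] 2 assms(3,4) by linarith
  qed
qed

lemma block_pos_less_iff:
  assumes "a \<in> {1, 2}" "a = 2 \<longrightarrow> odd n" "i < n div 2" "j < n div 2"
  shows "block_pos a i < block_pos a j \<longleftrightarrow> i < j"
proof
  show "i < j" if lt: "block_pos a i < block_pos a j"
  proof (rule ccontr)
    assume "\<not> i < j"
    then consider "i = j" | "j < i" by linarith
    then show False
      using block_pos_separated[OF assms(1,2), of j i] assms(3) lt by cases auto
  qed
qed (use block_pos_separated[OF assms(1,2)] assms(4) in blast)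

lemma circ_induced_matching_exists:
  assumes "a \<in> {1, 2}" "a < n" "a = 2 \<longrightarrow> odd n"
  shows "\<exists>M. induced_matching (circ_V n) (circ_adj n a) M \<and> card M = n div 2"
proof -
  let ?P = "block_pos a ` {..<n div 2}"
  note less_iff = block_pos_less_iff[OF assms(1,3)]
  have "inj_on (block_pos a) {..<n div 2}"
  proof (rule inj_onI)
    fix i j assume "i \<in> {..<n div 2}" "j \<in> {..<n div 2}" "block_pos a i = block_pos a j"
    then show "i = j"
      using less_iff[of i j] less_iff[of j i] by auto
  qed
  then have "card (spoke n ` ?P) = n div 2"
    by (simp add: card_image inj_on_subset[OF inj_spoke])
  moreover have "?P \<subseteq> {1..n}"
    using block_pos_in_range by blast
  moreover have "y - x \<noteq> a \<and> y - x + a \<noteq> n" if xy: "x \<in> ?P" "y \<in> ?P" "x < y" for x y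
  proof -
    obtain i j where "i < n div 2" "j < n div 2" "x = block_pos a i" "y = block_pos a j"
      using xy(1,2) by blast
    then show ?thesis
      using block_pos_separated[OF assms(1,3), of i j] less_iff[of i j] xy(3) by simp
  qed
  ultimately have "induced_matching (circ_V n) (circ_adj n a) (spoke n ` ?P)"
    using spoke_image_induced_matching[OF assms(2)] by blast
  with \<open>card (spoke n ` ?P) = n div 2\<close> show ?thesis
    by blast
qed

theorem lemma2p2:
  fixes n a :: nat
  assumes "1 \<le> a" and "a < n"
    and "a \<in> {1, 2}"
    and "graph_connected (circ_V n) (circ_adj n a)"
    and "cubic (circ_V n) (circ_adj n a)"
  shows "induced_matching_number (circ_V n) (circ_adj n a) = n div 2"
proof -
  have "a = 2 \<longrightarrow> odd n"
    using circ_disconnected_if_even[of a n] assms(2,4) by auto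
  then obtain M where "induced_matching (circ_V n) (circ_adj n a) M" "card M = n div 2"
    using circ_induced_matching_exists assms(2,3) by blast
  then show ?thesis
    using induced_matching_number_eqI circ_induced_matching_card_le[OF assms(1,2)] by blast
qed

end
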